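(* Let $G=(V,E)$ be a finite simple strongly connected directed graph and let $W\subsetneq V$ be a nonempty proper strongly connected subset. Then $\det(L_W)$ is an irreducible polynomial in the variables $(x_e)_{e\in E}$, $(y_v)_{v\in W}$ (over $\mathbb C$).
   Context: $x_e$ ($e\in E$) and $y_v$ ($v\in V$) are independent indeterminates. $Q$ is the $V\times V$ matrix with $Q_{vw}=x_e$ if $v\ne w$ and $e$ is an edge from $v$ to $w$ ($0$ if none), and $Q_{vv}=-\sum_{e:s(e)=v}x_e$. $L=Q+Y$ with $Y$ diagonal, $Y_{vv}=y_v$. $L_W$ is the principal submatrix of $L$ with rows and columns indexed by $W$. A subset $W$ is strongly connected if the induced subgraph $G_W$ is strongly connected. *)

theory Defs
  imports Complex_Main "HOL-Library.Poly_Mapping" "HOL-Combinatorics.Permutations"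
    "HOL-Computational_Algebra.Factorial_Ring"
begin

text \<open>Multivariate polynomials over the complex numbers in indeterminates of type 'x,
  represented as finitely supported maps from monomials (exponent vectors) to coefficients.\<close>
type_synonym 'x mpoly = "('x \<Rightarrow>\<^sub>0 nat) \<Rightarrow>\<^sub>0 complex"

definition var :: "'x \<Rightarrow> 'x mpoly" where
  "var x = Poly_Mapping.single (Poly_Mapping.single x 1) 1"

text \<open>Indeterminates: Inl e = x_e for an edge e = (v,w); Inr v = y_v for a vertex v.\<close>
type_synonym 'v indet = "('v \<times> 'v) + 'v"

definition simple_digraph :: "'v set \<Rightarrow> ('v \<times> 'v) set \<Rightarrow> bool" where
  "simple_digraph V E \<longleftrightarrow> finite V \<and> E \<subseteq> V \<times> V \<and> (\<forall>v. (v, v) \<notin> E)"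

definition strongly_connected :: "('v \<times> 'v) set \<Rightarrow> 'v set \<Rightarrow> bool" where
  "strongly_connected E W \<longleftrightarrow> (\<forall>u\<in>W. \<forall>w\<in>W. (u, w) \<in> (E \<inter> (W \<times> W))\<^sup>*)"

definition Qmat :: "('v \<times> 'v) set \<Rightarrow> 'v \<Rightarrow> 'v \<Rightarrow> 'v indet mpoly" where
  "Qmat E v w = (if v \<noteq> w then (if (v, w) \<in> E then var (Inl (v, w)) else 0)
                 else - (\<Sum>e\<in>{e\<in>E. fst e = v}. var (Inl e)))"

definition Lmat :: "('v \<times> 'v) set \<Rightarrow> 'v \<Rightarrow> 'v \<Rightarrow> 'v indet mpoly" where
  "Lmat E v w = Qmat E v w + (if v = w then var (Inr v) else 0)"

definition det_on :: "'v set \<Rightarrow> ('v \<Rightarrow> 'v \<Rightarrow> 'a::comm_ring_1) \<Rightarrow> 'a" where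
  "det_on W M = (\<Sum>p | p permutes W. of_int (sign p) * (\<Prod>v\<in>W. M v (p v)))"

end

theory Submission
  imports Defs "HOL-Combinatorics.Cycles" "HOL-Library.Transitive_Closure_Table"
begin

text \<open>The polynomial \<open>f = det L\<^sub>W\<close> is homogeneous of degree \<open>|W|\<close> and multiaffine, because
  row \<open>v\<close> only involves \<open>y\<^sub>v\<close> and the \<open>x\<^sub>e\<close> with \<open>e\<close> leaving \<open>v\<close>. In a factorisation
  \<open>f = g h\<close> of a multiaffine polynomial the factors involve disjoint sets of variables, so the
  coefficient of a squarefree monomial of \<open>f\<close> is the product of the coefficients of its
  \<open>g\<close>-part and its \<open>h\<close>-part, and by homogeneity all these \<open>h\<close>-parts have the same degree.

  The monomial \<open>\<Prod>\<^sub>v\<^sub>\<in>\<^sub>W y\<^sub>v\<close> has coefficient 1; let \<open>A\<close> and \<open>B\<close> be the rows whose \<open>y\<^sub>v\<close>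
  lies in \<open>g\<close> and in \<open>h\<close>, respectively. If \<open>B\<close> (or \<open>A\<close>) is empty, \<open>h\<close> (or \<open>g\<close>) is constant.
  Otherwise strong connectivity of \<open>G\<^sub>W\<close> yields a cycle \<open>C\<close> meeting both \<open>A\<close> and \<open>B\<close>, with
  successor map \<open>\<tau>\<close>. For \<open>D \<subseteq> C\<close>, replacing \<open>y\<^sub>v\<close> by \<open>x\<^sub>e\<close>, \<open>e = (v, \<tau> v)\<close>, for every
  \<open>v \<in> D\<close> gives a monomial with coefficient \<open>(-1)\<^bsup>|D|\<^esup>\<close>, plus \<open>(-1)\<^bsup>|C|-1\<^esup>\<close> from the
  cyclic permutation when \<open>D = C\<close>; so it is nonzero for \<open>D \<subset> C\<close> and zero for \<open>D = C\<close>.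
  The \<open>g\<close>-part of the monomial for \<open>C \<inter> A\<close> and the \<open>h\<close>-part of the one for \<open>C \<inter> B\<close>
  combine to the monomial for \<open>C\<close>, which would then have a nonzero coefficient.\<close>

abbreviation lookup :: "('a \<Rightarrow>\<^sub>0 'b::zero) \<Rightarrow> 'a \<Rightarrow> 'b" where
  "lookup \<equiv> poly_mapping.lookup"

abbreviation keys :: "('a \<Rightarrow>\<^sub>0 'b::zero) \<Rightarrow> 'a set" where
  "keys \<equiv> Poly_Mapping.keys"

section \<open>Coefficients, variables and degrees of polynomials\<close>

lemma lookup_mult_keys:
  fixes f g :: "'x mpoly"
  shows "lookup (f * g) k = (\<Sum>a\<in>keys f. \<Sum>b\<in>keys g. (lookup f a * lookup g b when k = a + b))"
proof -
  have "lookup (f * g) k = (\<Sum>a. lookup f a * (\<Sum>b. lookup g b when k = a + b))"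
    by (rule lookup_mult)
  also have "\<dots> = (\<Sum>a\<in>keys f. lookup f a * (\<Sum>b\<in>keys g. lookup g b when k = a + b))"
    by (subst Sum_any.expand_superset[of "keys f"], simp, fastforce simp: in_keys_iff)
       (intro sum.cong refl arg_cong2[where f = "(*)"] Sum_any.expand_superset;
        auto simp: in_keys_iff when_def)
  finally show ?thesis
    by (simp add: sum_distrib_left mult_when)
qed

lemma lookup_mult_unique_decomp:
  fixes g h :: "'x mpoly"
  assumes "\<And>a b. a \<in> keys g \<Longrightarrow> b \<in> keys h \<Longrightarrow> a0 + b0 = a + b \<Longrightarrow> a = a0 \<and> b = b0"
  shows "lookup (g * h) (a0 + b0) = lookup g a0 * lookup h b0"
proof -
  let ?c = "lookup g a0 * lookup h b0"
  have "lookup (g * h) (a0 + b0) =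
      (\<Sum>a\<in>keys g. \<Sum>b\<in>keys h. if a0 = a then (if b0 = b then ?c else 0) else 0)"
    unfolding lookup_mult_keys using assms by (intro sum.cong refl) (auto simp: when_def)
  also have "\<dots> = (\<Sum>a\<in>keys g. if a0 = a then (if b0 \<in> keys h then ?c else 0) else 0)"
    by (intro sum.cong refl) (simp add: sum.delta)
  also have "\<dots> = (if a0 \<in> keys g then (if b0 \<in> keys h then ?c else 0) else 0)"
    by (simp add: sum.delta)
  also have "\<dots> = ?c"
    by (auto simp: in_keys_iff)
  finally show ?thesis .
qed

definition vars :: "'x mpoly \<Rightarrow> 'x set" where
  "vars p = \<Union> (keys ` keys p)"

lemma keys_subset_vars: "m \<in> keys p \<Longrightarrow> keys m \<subseteq> vars p"
  by (auto simp: vars_def)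

lemma lookup_mult_disjoint_vars:
  fixes g h :: "'x mpoly"
  assumes "vars g \<subseteq> X" "vars h \<subseteq> Y" "X \<inter> Y = {}" "keys a \<subseteq> X" "keys b \<subseteq> Y"
  shows "lookup (g * h) (a + b) = lookup g a * lookup h b"
proof (rule lookup_mult_unique_decomp)
  fix a' b' assume a': "a' \<in> keys g" and b': "b' \<in> keys h" and ab: "a + b = a' + b'"
  have "lookup a' x = lookup a x \<and> lookup b' x = lookup b x" for x
  proof -
    have sum_eq: "lookup a x + lookup b x = lookup a' x + lookup b' x"
      using ab by (metis lookup_add)
    have "x \<notin> keys b \<and> x \<notin> keys b' \<or> x \<notin> keys a \<and> x \<notin> keys a'"
      using keys_subset_vars[OF a'] keys_subset_vars[OF b'] assms by blast
    with sum_eq show ?thesis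
      by (auto simp: in_keys_iff)
  qed
  then show "a' = a \<and> b' = b"
    by (auto intro!: poly_mapping_eqI)
qed

lemma vars_zero [simp]: "vars 0 = {}"
  by (simp add: vars_def)

lemma vars_add: "vars (p + q) \<subseteq> vars p \<union> vars q"
  unfolding vars_def using keys_add[of p q] by blast

lemma vars_uminus [simp]: "vars (- p) = vars p"
  by (simp add: vars_def)

lemma vars_sum: "vars (sum f I) \<subseteq> (\<Union>i\<in>I. vars (f i))"
  unfolding vars_def using keys_sum[of f I] by blast

lemma vars_mult: "vars (p * q) \<subseteq> vars p \<union> vars q"
  unfolding vars_def using keys_mult[of p q] keys_add by fastforce

lemma vars_prod: "vars (prod f I) \<subseteq> (\<Union>i\<in>I. vars (f i))"
proof (induction I rule: infinite_finite_induct)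
  case (insert i I)
  then show ?case using vars_mult[of "f i" "prod f I"] by auto
qed (simp_all add: vars_def)

lemma keys_var: "keys (var x) = {Poly_Mapping.single x 1}"
  by (simp add: var_def)

lemma vars_var [simp]: "vars (var x) = {x}"
  by (simp add: vars_def keys_var)

lemma keys_of_int: "keys (of_int k :: 'x mpoly) \<subseteq> {0}"
  by (auto simp: in_keys_iff lookup_of_int when_def split: if_splits)

lemma vars_of_int [simp]: "vars (of_int k :: 'x mpoly) = {}"
  using keys_of_int[of k] by (auto simp: vars_def)

lemma lookup_var_single [simp]:
  "lookup (var x) (Poly_Mapping.single z 1) = (if x = z then 1 else 0)"
proof -
  have "Poly_Mapping.single x (1::nat) = Poly_Mapping.single z 1 \<longleftrightarrow> x = z"
    by (metis lookup_single_eq lookup_single_not_eq one_neq_zero)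
  then show ?thesis
    by (simp add: var_def lookup_single when_def)
qed

definition multiaffine :: "'x mpoly \<Rightarrow> bool" where
  "multiaffine p \<longleftrightarrow> (\<forall>m\<in>keys p. \<forall>x. lookup m x \<le> 1)"

lemma multiaffine_zero: "multiaffine 0"
  by (simp add: multiaffine_def)

lemma multiaffine_add: "multiaffine p \<Longrightarrow> multiaffine q \<Longrightarrow> multiaffine (p + q)"
  unfolding multiaffine_def using keys_add[of p q] by blast

lemma multiaffine_uminus: "multiaffine p \<Longrightarrow> multiaffine (- p)"
  by (simp add: multiaffine_def)

lemma multiaffine_sum: "(\<And>i. i \<in> I \<Longrightarrow> multiaffine (f i)) \<Longrightarrow> multiaffine (sum f I)"
  unfolding multiaffine_def using keys_sum[of f I] by blast

lemma multiaffine_var: "multiaffine (var x)"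
  by (simp add: multiaffine_def keys_var lookup_single when_def)

lemma multiaffine_of_int: "multiaffine (of_int k)"
  using keys_of_int[of k] by (auto simp: multiaffine_def)

lemma multiaffine_mult:
  assumes "multiaffine p" "multiaffine q" "vars p \<inter> vars q = {}"
  shows "multiaffine (p * q)"
  unfolding multiaffine_def
proof (intro ballI allI)
  fix m x assume "m \<in> keys (p * q)"
  then obtain a b where ab: "m = a + b" "a \<in> keys p" "b \<in> keys q"
    using keys_mult[of p q] by blast
  have "lookup a x = 0 \<or> lookup b x = 0"
    using keys_subset_vars[OF ab(2)] keys_subset_vars[OF ab(3)] assms(3) by (meson disjoint_iff in_keys_iff subsetD)
  then show "lookup m x \<le> 1"
    using assms(1,2) ab unfolding multiaffine_def by (auto simp: lookup_add)
qed

lemma multiaffine_prod: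
  assumes "finite I" "\<And>i. i \<in> I \<Longrightarrow> multiaffine (f i)"
    "\<And>i. i \<in> I \<Longrightarrow> vars (f i) \<subseteq> S i" "disjoint_family_on S I"
  shows "multiaffine (prod f I)"
  using assms
proof (induction I rule: finite_induct)
  case (insert i I)
  have "vars (prod f I) \<subseteq> (\<Union>j\<in>I. S j)"
    using vars_prod[of f I] insert.prems(2) by blast
  moreover have "S i \<inter> (\<Union>j\<in>I. S j) = {}"
    using insert.prems(3) insert.hyps(2) by (auto simp: disjoint_family_on_def)
  ultimately have "vars (f i) \<inter> vars (prod f I) = {}"
    using insert.prems(2) by blast
  moreover have "disjoint_family_on S I"
    using insert.prems(3) by (auto simp: disjoint_family_on_def)
  ultimately show ?case
    using insert by (simp add: multiaffine_mult)
qed (simp add: multiaffine_def)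

definition monom_degree :: "('x \<Rightarrow>\<^sub>0 nat) \<Rightarrow> nat" where
  "monom_degree m = (\<Sum>x\<in>keys m. lookup m x)"

lemma monom_degree_add: "monom_degree (a + b) = monom_degree a + monom_degree b"
  unfolding monom_degree_def by (rule setsum_keys_plus_distrib) auto

lemma monom_degree_eq_0_iff: "monom_degree m = 0 \<longleftrightarrow> m = 0"
  by (auto simp: monom_degree_def in_keys_iff intro!: poly_mapping_eqI)

definition homogeneous :: "nat \<Rightarrow> 'x mpoly \<Rightarrow> bool" where
  "homogeneous d p \<longleftrightarrow> (\<forall>m\<in>keys p. monom_degree m = d)"

lemma homogeneous_zero: "homogeneous d 0"
  by (simp add: homogeneous_def)

lemma homogeneous_add: "homogeneous d p \<Longrightarrow> homogeneous d q \<Longrightarrow> homogeneous d (p + q)"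
  unfolding homogeneous_def using keys_add[of p q] by blast

lemma homogeneous_uminus: "homogeneous d p \<Longrightarrow> homogeneous d (- p)"
  by (simp add: homogeneous_def)

lemma homogeneous_sum:
  "(\<And>i. i \<in> I \<Longrightarrow> homogeneous d (f i)) \<Longrightarrow> homogeneous d (sum f I)"
  unfolding homogeneous_def using keys_sum[of f I] by blast

lemma homogeneous_mult: "homogeneous d p \<Longrightarrow> homogeneous e q \<Longrightarrow> homogeneous (d + e) (p * q)"
  unfolding homogeneous_def using keys_mult[of p q] by (force simp: monom_degree_add)

lemma homogeneous_of_int: "homogeneous 0 (of_int k)"
  using keys_of_int[of k] by (auto simp: homogeneous_def monom_degree_def)

lemma homogeneous_var: "homogeneous 1 (var x)"
  by (simp add: homogeneous_def keys_var monom_degree_def)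

lemma homogeneous_prod:
  "finite I \<Longrightarrow> (\<And>i. i \<in> I \<Longrightarrow> homogeneous 1 (f i)) \<Longrightarrow> homogeneous (card I) (prod f I)"
proof (induction I rule: finite_induct)
  case empty
  show ?case using homogeneous_of_int[of 1] by simp
next
  case (insert i I)
  then show ?case using homogeneous_mult[of 1 "f i" "card I" "prod f I"] by simp
qed

lemma homogeneous_not_unit:
  assumes "homogeneous d p" "d > 0"
  shows "\<not> p dvd 1"
proof
  assume "p dvd 1"
  then obtain u where u: "1 = p * u" by (auto elim: dvdE)
  have "lookup (p * u) (0 + 0) = lookup p 0 * lookup u 0"
    by (rule lookup_mult_unique_decomp) (metis add_is_0 monom_degree_add monom_degree_eq_0_iff)
  moreover have "0 \<notin> keys p"
    using assms by (auto simp: homogeneous_def monom_degree_def)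
  ultimately show False
    using u by (metis add_0 in_keys_iff lookup_one_zero mult_zero_left one_neq_zero)
qed

lemma homogeneous_0_unit:
  fixes p :: "'x mpoly"
  assumes "p \<noteq> 0" "homogeneous 0 p"
  shows "p dvd 1"
proof -
  define c where "c = lookup p 0"
  have "keys p \<subseteq> {0}"
    using assms(2) by (auto simp: homogeneous_def monom_degree_eq_0_iff)
  then have "keys p = {0}"
    using assms(1) by (simp add: subset_singleton_iff)
  then have "c \<noteq> 0" "\<And>k. k \<noteq> 0 \<Longrightarrow> lookup p k = 0"
    by (auto simp: c_def not_in_keys_iff_lookup_eq_zero[symmetric])
  then have "p = Poly_Mapping.single 0 c"
    by (intro poly_mapping_eqI) (simp add: c_def lookup_single when_def)
  then have "p * Poly_Mapping.single 0 (inverse c) = 1"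
    using \<open>c \<noteq> 0\<close> by (simp add: mult_single)
  then show ?thesis
    by (metis dvdI)
qed

section \<open>Factors of multiaffine polynomials\<close>

lemma base_expansion_less:
  "(\<And>i. i < n \<Longrightarrow> d i < B) \<Longrightarrow> (\<Sum>i<n. d i * B ^ i) < (B::nat) ^ n"
proof (induction n)
  case (Suc n)
  have "(\<Sum>i<Suc n. d i * B ^ i) = (\<Sum>i<n. d i * B ^ i) + d n * B ^ n"
    by simp
  also have "\<dots> < (d n + 1) * B ^ n"
    using Suc by simp
  also have "\<dots> \<le> B * B ^ n"
    using Suc.prems[of n] by (intro mult_right_mono) auto
  finally show ?case by simp
qed simp

lemma base_expansion_inj:
  "(\<And>i. i < n \<Longrightarrow> d i < B) \<Longrightarrow> (\<And>i. i < n \<Longrightarrow> e i < B) \<Longrightarrow>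
   (\<Sum>i<n. d i * B ^ i) = (\<Sum>i<n. e i * (B::nat) ^ i) \<Longrightarrow> i < n \<Longrightarrow> d i = e i"
proof (induction n arbitrary: i)
  case (Suc n)
  let ?x = "\<Sum>i<n. d i * B ^ i" and ?y = "\<Sum>i<n. e i * B ^ i"
  have x: "?x < B ^ n" and y: "?y < B ^ n"
    using Suc.prems(1,2) by (intro base_expansion_less; simp)+
  have div: "u < P \<Longrightarrow> (u + c * P) div P = c" for u c P :: nat
    by simp
  have eq: "?x + d n * B ^ n = ?y + e n * B ^ n"
    using Suc.prems(3) by simp
  then have top: "d n = e n"
    using div[OF x, of "d n"] div[OF y, of "e n"] by simp
  show ?case
  proof (cases "i = n")
    case False
    then have "i < n"
      using Suc.prems(4) by simp
    then show ?thesis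
      using Suc.IH[of i] Suc.prems(1,2) eq top by simp
  qed (simp add: top)
qed simp

lemma exists_exponent_bound:
  fixes M :: "('x \<Rightarrow>\<^sub>0 nat) set"
  assumes "finite M"
  obtains B where "\<And>a x. a \<in> M \<Longrightarrow> lookup a x < B"
proof
  fix a x assume a: "a \<in> M"
  show "lookup a x < Suc (\<Sum>a\<in>M. \<Sum>x\<in>keys a. lookup a x)"
  proof (cases "x \<in> keys a")
    case True
    have "lookup a x \<le> (\<Sum>x\<in>keys a. lookup a x)"
      using True by (intro member_le_sum) auto
    also have "\<dots> \<le> (\<Sum>a\<in>M. \<Sum>x\<in>keys a. lookup a x)"
      using a assms by (intro member_le_sum) auto
    finally show ?thesis by simp
  qed (simp add: in_keys_iff)
qed

lemma inj_on_digit_weight: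
  fixes M :: "('x \<Rightarrow>\<^sub>0 nat) set"
  assumes "\<And>a x. a \<in> M \<Longrightarrow> lookup a x < B" "\<And>a. a \<in> M \<Longrightarrow> keys a \<subseteq> v ` {..<k}"
  shows "inj_on (\<lambda>a. \<Sum>i<k. lookup a (v i) * B ^ i) M"
proof (rule inj_onI, rule poly_mapping_eqI)
  fix a b x
  assume a: "a \<in> M" and b: "b \<in> M"
    and eq: "(\<Sum>i<k. lookup a (v i) * B ^ i) = (\<Sum>i<k. lookup b (v i) * B ^ i)"
  have digits: "lookup a (v i) = lookup b (v i)" if "i < k" for i
    by (rule base_expansion_inj[OF _ _ eq that]) (simp_all add: assms(1) a b)
  show "lookup a x = lookup b x"
  proof (cases "x \<in> v ` {..<k}")
    case True
    then show ?thesis using digits by auto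
  next
    case False
    then have "x \<notin> keys a" "x \<notin> keys b"
      using assms(2) a b by auto
    then show ?thesis by (simp add: in_keys_iff)
  qed
qed

text \<open>Read the exponents as digits in a base exceeding all of them, with the exponent of \<open>z\<close>
  as the leading digit.\<close>

lemma exists_separating_weight:
  fixes M :: "('x \<Rightarrow>\<^sub>0 nat) set"
  assumes "finite M"
  obtains w :: "('x \<Rightarrow>\<^sub>0 nat) \<Rightarrow> nat"
  where "\<And>a b. w (a + b) = w a + w b" and "inj_on w M"
    and "\<And>a b. a \<in> M \<Longrightarrow> b \<in> M \<Longrightarrow> lookup a z < lookup b z \<Longrightarrow> w a < w b"
proof -
  define S where "S = \<Union> (keys ` M) - {z}"
  define n where "n = card S"
  obtain h where h: "bij_betw h {0..<n} S"
    using ex_bij_betw_nat_finite[of S] assms by (auto simp: S_def n_def)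
  obtain B where B: "\<And>a x. a \<in> M \<Longrightarrow> lookup a x < B"
    using exists_exponent_bound[OF assms] by blast
  define v where "v i = (if i < n then h i else z)" for i
  define w where "w a = (\<Sum>i<Suc n. lookup a (v i) * B ^ i)" for a
  show ?thesis
  proof
    show "w (a + b) = w a + w b" for a b
      by (simp add: w_def lookup_add distrib_right sum.distrib)
    have "S \<subseteq> v ` {..<Suc n}"
      using h by (force simp: v_def bij_betw_def)
    then have "keys a \<subseteq> v ` {..<Suc n}" if "a \<in> M" for a
      using that by (auto simp: S_def v_def image_iff intro: bexI[of _ n])
    then show "inj_on w M"
      unfolding w_def using B by (intro inj_on_digit_weight) auto
    show "w a < w b" if "a \<in> M" "b \<in> M" "lookup a z < lookup b z" for a b
    proof -
      have "(\<Sum>i<n. lookup a (v i) * B ^ i) < B ^ n"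
        using B[OF that(1)] by (intro base_expansion_less)
      then have "w a < (lookup a z + 1) * B ^ n"
        by (simp add: w_def v_def)
      also have "\<dots> \<le> lookup b z * B ^ n"
        using that by (intro mult_right_mono) auto
      also have "\<dots> \<le> w b"
        by (simp add: w_def v_def)
      finally show ?thesis .
    qed
  qed
qed

lemma exists_max_weight:
  fixes w :: "'a \<Rightarrow> nat"
  assumes "finite S" "S \<noteq> {}"
  obtains a where "a \<in> S" "\<And>b. b \<in> S \<Longrightarrow> w b \<le> w a"
proof -
  have "Max (w ` S) \<in> w ` S"
    using assms by simp
  then obtain a where "a \<in> S" "w a = Max (w ` S)"
    by auto
  moreover have "w b \<le> Max (w ` S)" if "b \<in> S" for b
    using assms that by simp
  ultimately show ?thesis
    using that by simp
qed

lemma lookup_mult_max_weight: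
  fixes g h :: "'x mpoly" and w :: "('x \<Rightarrow>\<^sub>0 nat) \<Rightarrow> nat"
  assumes "\<And>a b. w (a + b) = w a + w b" "inj_on w (keys g \<union> keys h)"
    and "a0 \<in> keys g" "\<And>a. a \<in> keys g \<Longrightarrow> w a \<le> w a0"
    and "b0 \<in> keys h" "\<And>b. b \<in> keys h \<Longrightarrow> w b \<le> w b0"
  shows "lookup (g * h) (a0 + b0) = lookup g a0 * lookup h b0"
proof (rule lookup_mult_unique_decomp)
  fix a b assume ab: "a \<in> keys g" "b \<in> keys h" "a0 + b0 = a + b"
  have "w a0 + w b0 = w a + w b"
    using arg_cong[OF ab(3), of w] assms(1) by simp
  moreover have "w a \<le> w a0" "w b \<le> w b0"
    using assms(4,6) ab(1,2) by simp_all
  ultimately have "w a = w a0" "w b = w b0"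
    by linarith+
  then show "a = a0 \<and> b = b0"
    using assms(2,3,5) ab(1,2) by (auto dest: inj_onD)
qed

text \<open>Multiplying the monomials of maximal weight (weight refining the degree in a common variable
  \<open>z\<close>) gives a monomial of \<open>g * h\<close> containing \<open>z\<close> at least twice.\<close>

lemma multiaffine_mult_vars_disjoint:
  fixes g h :: "'x mpoly"
  assumes "multiaffine (g * h)" "g \<noteq> 0" "h \<noteq> 0"
  shows "vars g \<inter> vars h = {}"
proof (rule ccontr)
  assume "vars g \<inter> vars h \<noteq> {}"
  then obtain z a b where z: "a \<in> keys g" "z \<in> keys a" "b \<in> keys h" "z \<in> keys b"
    by (auto simp: vars_def)
  obtain w :: "('x \<Rightarrow>\<^sub>0 nat) \<Rightarrow> nat" where w_add: "\<And>a b. w (a + b) = w a + w b" and w_inj: "inj_on w (keys g \<union> keys h)"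
    and w_mono: "\<And>a b. a \<in> keys g \<union> keys h \<Longrightarrow> b \<in> keys g \<union> keys h \<Longrightarrow>
      lookup a z < lookup b z \<Longrightarrow> w a < w b"
    using exists_separating_weight[OF finite_UnI[OF finite_keys finite_keys], of g h z] by blast
  obtain a0 where a0: "a0 \<in> keys g" "\<And>a. a \<in> keys g \<Longrightarrow> w a \<le> w a0"
    using exists_max_weight[of "keys g" w] assms(2) by auto
  obtain b0 where b0: "b0 \<in> keys h" "\<And>b. b \<in> keys h \<Longrightarrow> w b \<le> w b0"
    using exists_max_weight[of "keys h" w] assms(3) by auto
  have "lookup (g * h) (a0 + b0) \<noteq> 0"
    using lookup_mult_max_weight[OF w_add w_inj a0 b0] a0(1) b0(1) by (simp add: in_keys_iff)
  then have "lookup (a0 + b0) z \<le> 1"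
    using assms(1) by (simp add: multiaffine_def in_keys_iff)
  then have "lookup a0 z + lookup b0 z \<le> 1"
    by (simp add: lookup_add)
  moreover have "\<not> w a0 < w a" "\<not> w b0 < w b"
    using a0(2)[OF z(1)] b0(2)[OF z(3)] by simp_all
  then have "\<not> lookup a0 z < lookup a z" "\<not> lookup b0 z < lookup b z"
    using w_mono[of a0 a] w_mono[of b0 b] a0(1) b0(1) z(1,3) by blast+
  moreover have "lookup a z \<ge> 1" "lookup b z \<ge> 1"
    using z by (auto simp: in_keys_iff)
  ultimately show False
    by linarith
qed

definition set_monom :: "'x set \<Rightarrow> ('x \<Rightarrow>\<^sub>0 nat)" where
  "set_monom Z = (\<Sum>x\<in>Z. Poly_Mapping.single x 1)"

lemma lookup_set_monom: "finite Z \<Longrightarrow> lookup (set_monom Z) x = (if x \<in> Z then 1 else 0)"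
  by (simp add: set_monom_def lookup_sum lookup_single when_def)

lemma keys_set_monom: "finite Z \<Longrightarrow> keys (set_monom Z) = Z"
  by (auto simp: in_keys_iff lookup_set_monom split: if_splits)

lemma monom_degree_set_monom: "finite Z \<Longrightarrow> monom_degree (set_monom Z) = card Z"
  by (simp add: monom_degree_def keys_set_monom lookup_set_monom)

lemma set_monom_image:
  "inj_on f A \<Longrightarrow> set_monom (f ` A) = (\<Sum>a\<in>A. Poly_Mapping.single (f a) 1)"
  by (simp add: set_monom_def sum.reindex)

lemma lookup_mult_set_monom:
  fixes g h :: "'x mpoly"
  assumes "vars g \<inter> vars h = {}" "finite Z"
  shows "lookup (g * h) (set_monom Z) =
    lookup g (set_monom (Z - vars h)) * lookup h (set_monom (Z \<inter> vars h))"
proof -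
  have "set_monom Z = set_monom (Z - vars h) + set_monom (Z \<inter> vars h)"
    unfolding set_monom_def using assms(2)
    by (subst sum.union_disjoint[symmetric]) (auto simp: Un_Diff_Int)
  also have "lookup (g * h) \<dots> =
      lookup g (set_monom (Z - vars h)) * lookup h (set_monom (Z \<inter> vars h))"
    using assms by (intro lookup_mult_disjoint_vars[of g "- vars h" h "vars h"])
      (auto simp: keys_set_monom)
  finally show ?thesis .
qed

lemma monom_degree_factor:
  fixes g h :: "'x mpoly"
  assumes "homogeneous d (g * h)" "vars g \<inter> vars h = {}" "b \<in> keys h"
    and "finite Z" "lookup (g * h) (set_monom Z) \<noteq> 0"
  shows "monom_degree b = card (Z \<inter> vars h)"
proof -
  let ?a = "set_monom (Z - vars h)"
  have "lookup g ?a \<noteq> 0"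
    using assms(2,4,5) by (simp add: lookup_mult_set_monom)
  moreover have "lookup (g * h) (?a + b) = lookup g ?a * lookup h b"
    using assms(2-4) keys_subset_vars[OF assms(3)]
    by (intro lookup_mult_disjoint_vars[of g "- vars h" h "vars h"]) (auto simp: keys_set_monom)
  ultimately have "?a + b \<in> keys (g * h)"
    using assms(3) by (simp add: in_keys_iff)
  then have "monom_degree (?a + b) = d"
    using assms(1) by (simp add: homogeneous_def)
  then have "card (Z - vars h) + monom_degree b = d"
    using assms(4) by (simp add: monom_degree_add monom_degree_set_monom)
  moreover have "monom_degree (set_monom Z) = d"
    using assms(1,5) by (simp add: homogeneous_def in_keys_iff)
  then have "card Z = d"
    using assms(4) by (simp add: monom_degree_set_monom)
  ultimately show ?thesis
    using card_Int_Diff[OF assms(4), of "vars h"] by simp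
qed

lemma card_inter_vars_eq:
  fixes g h :: "'x mpoly"
  assumes "homogeneous d (g * h)" "vars g \<inter> vars h = {}"
    and "finite Z1" "lookup (g * h) (set_monom Z1) \<noteq> 0"
    and "finite Z2" "lookup (g * h) (set_monom Z2) \<noteq> 0"
  shows "card (Z1 \<inter> vars h) = card (Z2 \<inter> vars h)"
proof -
  have "set_monom (Z2 \<inter> vars h) \<in> keys h"
    using assms(2,5,6) by (simp add: lookup_mult_set_monom in_keys_iff)
  from monom_degree_factor[OF assms(1,2) this assms(3,4)] show ?thesis
    using assms(5) by (simp add: monom_degree_set_monom)
qed

section \<open>Coefficients of the determinant\<close>

definition row_vars :: "('v \<times> 'v) set \<Rightarrow> 'v \<Rightarrow> 'v indet set" where
  "row_vars E v = insert (Inr v) (Inl ` {e\<in>E. fst e = v})"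

lemma disjoint_family_row_vars: "disjoint_family_on (row_vars E) W"
  by (auto simp: disjoint_family_on_def row_vars_def)

lemma vars_Lmat: "vars (Lmat E v w) \<subseteq> row_vars E v"
proof -
  have "vars (Qmat E v w) \<subseteq> row_vars E v"
    using vars_sum[of "\<lambda>e. var (Inl e)" "{e\<in>E. fst e = v}"]
    by (auto simp: Qmat_def row_vars_def)
  then show ?thesis
    unfolding Lmat_def using vars_add[of "Qmat E v w" "if v = w then var (Inr v) else 0"]
    by (auto simp: row_vars_def split: if_splits)
qed

lemma multiaffine_Lmat: "multiaffine (Lmat E v w)"
proof -
  have "multiaffine (Qmat E v w)"
    unfolding Qmat_def by (auto intro!: multiaffine_uminus multiaffine_sum multiaffine_var
      multiaffine_zero)
  moreover have "multiaffine (if v = w then var (Inr v) else 0)"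
    by (simp add: multiaffine_var multiaffine_zero)
  ultimately show ?thesis
    unfolding Lmat_def by (rule multiaffine_add)
qed

lemma homogeneous_Lmat: "homogeneous 1 (Lmat E v w)"
proof -
  have "homogeneous 1 (Qmat E v w)"
    unfolding Qmat_def by (auto intro!: homogeneous_uminus homogeneous_sum homogeneous_var
      homogeneous_zero simp del: One_nat_def)
  moreover have "homogeneous 1 (if v = w then var (Inr v) else 0)"
    by (simp add: homogeneous_var homogeneous_zero del: One_nat_def)
  ultimately show ?thesis
    unfolding Lmat_def by (rule homogeneous_add)
qed

lemma multiaffine_det_Lmat: "finite W \<Longrightarrow> multiaffine (det_on W (Lmat E))"
  unfolding det_on_def
  by (intro multiaffine_sum multiaffine_mult multiaffine_of_int multiaffine_prod[of _ _ "row_vars E"]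
      multiaffine_Lmat vars_Lmat disjoint_family_row_vars) simp_all

lemma homogeneous_det_Lmat: "finite W \<Longrightarrow> homogeneous (card W) (det_on W (Lmat E))"
  unfolding det_on_def
  using homogeneous_mult[OF homogeneous_of_int homogeneous_prod[OF _ homogeneous_Lmat]]
  by (intro homogeneous_sum) simp

lemma lookup_prod_disjoint_vars:
  fixes f :: "'a \<Rightarrow> 'x mpoly"
  assumes "finite I" "disjoint_family_on S I" "\<And>i. i \<in> I \<Longrightarrow> vars (f i) \<subseteq> S i"
    and "\<And>i. i \<in> I \<Longrightarrow> z i \<in> S i"
  shows "lookup (prod f I) (\<Sum>i\<in>I. Poly_Mapping.single (z i) 1) =
    (\<Prod>i\<in>I. lookup (f i) (Poly_Mapping.single (z i) 1))"
  using assms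
proof (induction I rule: finite_induct)
  case (insert i I)
  have "S i \<inter> (\<Union>j\<in>I. S j) = {}"
    using insert.prems(1) insert.hyps(2) by (auto simp: disjoint_family_on_def)
  moreover have "vars (prod f I) \<subseteq> (\<Union>j\<in>I. S j)"
    using vars_prod[of f I] insert.prems(2) by blast
  moreover have "keys (\<Sum>j\<in>I. Poly_Mapping.single (z j) (1::nat)) \<subseteq> (\<Union>j\<in>I. S j)"
    using keys_sum[of "\<lambda>j. Poly_Mapping.single (z j) (1::nat)" I] insert.prems(3) by auto
  ultimately have "lookup (f i * prod f I)
      (Poly_Mapping.single (z i) 1 + (\<Sum>j\<in>I. Poly_Mapping.single (z j) 1)) =
    lookup (f i) (Poly_Mapping.single (z i) 1) * lookup (prod f I) (\<Sum>j\<in>I. Poly_Mapping.single (z j) 1)"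
    using insert.prems by (intro lookup_mult_disjoint_vars) auto
  moreover have "disjoint_family_on S I"
    using insert.prems(1) by (auto simp: disjoint_family_on_def)
  ultimately show ?case
    using insert by simp
qed simp

text \<open>Distinct rows involve disjoint sets of indeterminates, so a monomial taking one indeterminate
  from each row arises from each product of entries in only one way.\<close>

lemma lookup_det_Lmat_transversal:
  assumes "finite W" "\<And>v. v \<in> W \<Longrightarrow> z v \<in> row_vars E v"
  shows "lookup (det_on W (Lmat E)) (\<Sum>v\<in>W. Poly_Mapping.single (z v) 1) =
    det_on W (\<lambda>v w. lookup (Lmat E v w) (Poly_Mapping.single (z v) 1))"
  unfolding det_on_def lookup_sum
  by (intro sum.cong refl)
    (simp add: lookup_mult lookup_of_int when_mult
      lookup_prod_disjoint_vars[OF assms(1) disjoint_family_row_vars vars_Lmat assms(2)]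
      del: One_nat_def)

definition row_var :: "('v \<Rightarrow> 'v) \<Rightarrow> 'v set \<Rightarrow> 'v \<Rightarrow> 'v indet" where
  "row_var \<tau> D v = (if v \<in> D then Inl (v, \<tau> v) else Inr v)"

definition row_var_coeff :: "('v \<Rightarrow> 'v) \<Rightarrow> 'v set \<Rightarrow> 'v \<Rightarrow> 'v \<Rightarrow> complex" where
  "row_var_coeff \<tau> D v w =
    (if v \<in> D then (if w = v then -1 else if w = \<tau> v then 1 else 0) else (if w = v then 1 else 0))"

lemma inj_on_row_var: "inj_on (row_var \<tau> D) W"
  by (rule inj_onI) (auto simp: row_var_def split: if_splits)

lemma lookup_Lmat_row_var:
  assumes "finite E" "\<And>v. (v, v) \<notin> E" "v \<in> D \<Longrightarrow> (v, \<tau> v) \<in> E"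
  shows "lookup (Lmat E v w) (Poly_Mapping.single (row_var \<tau> D v) 1) = row_var_coeff \<tau> D v w"
proof (cases "v \<in> D")
  case True
  then have "(v, \<tau> v) \<in> E" "\<tau> v \<noteq> v"
    using assms by auto
  moreover have "(\<Sum>e\<in>{e\<in>E. fst e = v}. if e = (v, \<tau> v) then 1 else 0) = (1::complex)"
    using \<open>(v, \<tau> v) \<in> E\<close> assms(1) by (simp add: sum.delta')
  ultimately show ?thesis
    using True by (auto simp: Lmat_def Qmat_def row_var_def row_var_coeff_def lookup_add lookup_sum
      simp del: One_nat_def)
qed (auto simp: Lmat_def Qmat_def row_var_def row_var_coeff_def lookup_add lookup_sum
  simp del: One_nat_def)

lemma lookup_det_Lmat_row_var:
  assumes "finite E" "\<And>v. (v, v) \<notin> E" "finite W" "\<And>v. v \<in> D \<Longrightarrow> (v, \<tau> v) \<in> E"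
  shows "lookup (det_on W (Lmat E)) (set_monom (row_var \<tau> D ` W)) = det_on W (row_var_coeff \<tau> D)"
proof -
  have "row_var \<tau> D v \<in> row_vars E v" for v
    using assms(4) by (auto simp: row_var_def row_vars_def)
  then show ?thesis
    unfolding set_monom_image[OF inj_on_row_var]
    by (simp add: lookup_det_Lmat_transversal[OF assms(3)] lookup_Lmat_row_var[OF assms(1,2,4)]
      del: One_nat_def)
qed

lemma det_on_eq_sum_subset:
  fixes M :: "'v \<Rightarrow> 'v \<Rightarrow> 'a::comm_ring_1"
  assumes "finite W" "S \<subseteq> {p. p permutes W}"
    and "\<And>p. p permutes W \<Longrightarrow> (\<Prod>v\<in>W. M v (p v)) \<noteq> 0 \<Longrightarrow> p \<in> S"
  shows "det_on W M = (\<Sum>p\<in>S. of_int (sign p) * (\<Prod>v\<in>W. M v (p v)))"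
  unfolding det_on_def
proof (rule sum.mono_neutral_right)
  show "\<forall>p\<in>{p. p permutes W} - S. of_int (sign p) * (\<Prod>v\<in>W. M v (p v)) = 0"
    using assms(3) by force
qed (use assms finite_permutations[OF assms(1)] in auto)

lemma row_var_coeff_nonzero:
  "row_var_coeff \<tau> D v w \<noteq> 0 \<Longrightarrow> w = v \<or> v \<in> D \<and> w = \<tau> v"
  by (auto simp: row_var_coeff_def split: if_splits)

lemma prod_row_var_coeff_diag:
  assumes "finite W" "D \<subseteq> W"
  shows "(\<Prod>v\<in>W. row_var_coeff \<tau> D v v) = (-1) ^ card D"
proof -
  have "(\<Prod>v\<in>W. row_var_coeff \<tau> D v v) = (\<Prod>v\<in>W. if v \<in> D then -1 else 1)"
    by (intro prod.cong refl) (simp add: row_var_coeff_def)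
  also have "\<dots> = (-1) ^ card D"
    using assms by (simp add: prod.If_cases Int_absorb1)
  finally show ?thesis .
qed

lemma det_on_row_var_coeff_empty:
  assumes "finite W"
  shows "det_on W (row_var_coeff \<tau> {}) = 1"
proof -
  have "det_on W (row_var_coeff \<tau> {}) =
      (\<Sum>p\<in>{id}. of_int (sign p) * (\<Prod>v\<in>W. row_var_coeff \<tau> {} v (p v)))"
  proof (rule det_on_eq_sum_subset[OF assms])
    fix p assume p: "p permutes W" "(\<Prod>v\<in>W. row_var_coeff \<tau> {} v (p v)) \<noteq> 0"
    have "p v = v" for v
      using row_var_coeff_nonzero[of \<tau> "{}" v "p v"] p assms permutes_not_in[OF p(1)]
      by (cases "v \<in> W") auto
    then show "p \<in> {id}"
      by auto
  qed (simp add: permutes_id)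
  then show ?thesis
    using prod_row_var_coeff_diag[OF assms, of "{}"] by simp
qed

lemma row_var_empty [simp]: "row_var \<tau> {} = Inr"
  by (simp add: row_var_def fun_eq_iff)

lemma lookup_det_Lmat_diagonal:
  assumes "finite E" "\<And>v. (v, v) \<notin> E" "finite W"
  shows "lookup (det_on W (Lmat E)) (set_monom (Inr ` W)) = 1"
  using lookup_det_Lmat_row_var[OF assms, of "{}" id] det_on_row_var_coeff_empty[OF assms(3)]
  by simp

section \<open>Cycles\<close>

lemma cycle_of_list_nth:
  assumes "distinct cs" "i < length cs"
  shows "(cycle_of_list cs ^^ n) (cs ! i) = cs ! ((n + i) mod length cs)"
proof -
  have "map (cycle_of_list cs ^^ n) cs ! i = rotate n cs ! i"
    using cyclic_rotation[OF assms(1)] by simp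
  then show ?thesis
    using assms(2) by (simp add: nth_rotate)
qed

lemma cycle_of_list_orbit_subset:
  assumes "distinct cs" "c \<in> set cs" "c \<in> J" "\<And>x. x \<in> J \<Longrightarrow> cycle_of_list cs x \<in> J"
  shows "set cs \<subseteq> J"
proof
  fix y assume "y \<in> set cs"
  then obtain j where j: "j < length cs" "y = cs ! j"
    by (auto simp: in_set_conv_nth)
  obtain i where i: "i < length cs" "c = cs ! i"
    using assms(2) by (auto simp: in_set_conv_nth)
  have "(cycle_of_list cs ^^ n) c \<in> J" for n
    by (induction n) (auto intro: assms(3,4))
  moreover have "(cycle_of_list cs ^^ (j + length cs - i)) c = y"
    using cycle_of_list_nth[OF assms(1) i(1)] i j by simp
  ultimately show "y \<in> J"
    by metis
qed

lemma cycle_of_list_no_fixpoint: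
  assumes "distinct cs" "length cs \<ge> 2" "x \<in> set cs"
  shows "cycle_of_list cs x \<noteq> x"
proof -
  obtain i where i: "i < length cs" "x = cs ! i"
    using assms(3) by (auto simp: in_set_conv_nth)
  have "cycle_of_list cs x = cs ! (Suc i mod length cs)"
    using cycle_of_list_nth[OF assms(1) i(1), of 1] i by simp
  moreover have "Suc i mod length cs \<noteq> i" "Suc i mod length cs < length cs"
    using i(1) assms(2) by (auto simp: mod_Suc)
  ultimately show ?thesis
    using i assms(1) by (simp add: nth_eq_iff_index_eq)
qed

lemma sign_cycle_of_list:
  "distinct cs \<Longrightarrow> sign (cycle_of_list cs) = (-1) ^ (length cs - 1)"
proof (induction cs rule: cycle_of_list.induct)
  case (1 i j cs)
  have "sign (cycle_of_list (i # j # cs)) =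
      sign (Transposition.transpose i j) * sign (cycle_of_list (j # cs))"
    by (metis cycle_of_list.simps(1) sign_compose permutation_swap_id permutation_of_cycle)
  also have "\<dots> = (-1) * (-1) ^ length cs"
    using 1 by (simp add: sign_swap_id)
  finally show ?case
    by (simp del: cycle_of_list.simps)
qed simp_all

lemma permutes_along_cycle_cases:
  assumes cs: "distinct cs" "length cs \<ge> 2" "set cs \<subseteq> W" and D: "D \<subseteq> set cs"
    and p: "p permutes W"
    and fixed: "\<And>v. v \<in> W \<Longrightarrow> v \<notin> D \<Longrightarrow> p v = v"
    and step: "\<And>v. v \<in> D \<Longrightarrow> p v = v \<or> p v = cycle_of_list cs v"
  shows "p = id \<or> D = set cs \<and> p = cycle_of_list cs"
proof (cases "\<exists>v\<in>D. p v \<noteq> v")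
  case False
  then have "p v = v" for v
    using fixed permutes_not_in[OF p] by (cases "v \<in> W") auto
  then show ?thesis by auto
next
  case True
  define J where "J = {v\<in>D. p v \<noteq> v}"
  have closed: "cycle_of_list cs x \<in> J" if "x \<in> J" for x
  proof -
    let ?u = "cycle_of_list cs x"
    have x: "x \<in> set cs" "p x = ?u"
      using that D step by (auto simp: J_def)
    have "?u \<noteq> x"
      using cycle_of_list_no_fixpoint[OF cs(1,2) x(1)] .
    then have "p ?u \<noteq> ?u"
      using x(2) permutes_inj[OF p] by (metis injD)
    moreover have "?u \<in> W"
      using cycle_permutes[of cs] x(1) cs(3) by (auto simp: permutes_in_image)
    ultimately show ?thesis
      using fixed by (auto simp: J_def)
  qed
  obtain c where "c \<in> J"
    using True by (auto simp: J_def)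
  then have "set cs \<subseteq> J"
    using cycle_of_list_orbit_subset[OF cs(1) _ _ closed] D by (auto simp: J_def)
  then have DC: "D = set cs"
    using D by (auto simp: J_def)
  have "p v = cycle_of_list cs v" for v
  proof (cases "v \<in> set cs")
    case True
    then show ?thesis
      using \<open>set cs \<subseteq> J\<close> step by (auto simp: J_def)
  next
    case False
    then show ?thesis
      using id_outside_supp[OF False] DC fixed permutes_not_in[OF p] by (cases "v \<in> W") auto
  qed
  then show ?thesis
    using DC by auto
qed

lemma cycle_of_list_neq_id:
  assumes "distinct cs" "length cs \<ge> 2"
  shows "cycle_of_list cs \<noteq> id"
proof -
  have "cs ! 0 \<in> set cs"
    using assms(2) by (intro nth_mem) linarith
  then have "cycle_of_list cs (cs ! 0) \<noteq> cs ! 0"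
    by (rule cycle_of_list_no_fixpoint[OF assms])
  then show ?thesis
    by auto
qed

lemma permutes_row_var_coeff_cycle:
  assumes cs: "distinct cs" "length cs \<ge> 2" "set cs \<subseteq> W" and D: "D \<subseteq> set cs"
    and p: "p permutes W" "finite W" "(\<Prod>v\<in>W. row_var_coeff (cycle_of_list cs) D v (p v)) \<noteq> 0"
  shows "p = id \<or> D = set cs \<and> p = cycle_of_list cs"
proof (rule permutes_along_cycle_cases[OF cs D p(1)])
  have nonzero: "row_var_coeff (cycle_of_list cs) D v (p v) \<noteq> 0" if "v \<in> W" for v
    using that p(2,3) by auto
  show "p v = v" if "v \<in> W" "v \<notin> D" for v
    using row_var_coeff_nonzero[OF nonzero[OF that(1)]] that(2) by blast
  show "p v = v \<or> p v = cycle_of_list cs v" if "v \<in> D" for v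
    using row_var_coeff_nonzero[OF nonzero] that D cs(3) by blast
qed

lemma prod_row_var_coeff_cycle:
  assumes "distinct cs" "length cs \<ge> 2"
  shows "(\<Prod>v\<in>W. row_var_coeff (cycle_of_list cs) (set cs) v (cycle_of_list cs v)) = 1"
proof (intro prod.neutral ballI)
  fix v
  show "row_var_coeff (cycle_of_list cs) (set cs) v (cycle_of_list cs v) = 1"
  proof (cases "v \<in> set cs")
    case True
    then show ?thesis
      using cycle_of_list_no_fixpoint[OF assms True] by (simp add: row_var_coeff_def)
  next
    case False
    then show ?thesis
      using id_outside_supp[OF False] by (simp add: row_var_coeff_def)
  qed
qed

lemma det_on_row_var_coeff_cycle:
  assumes W: "finite W" and cs: "distinct cs" "length cs \<ge> 2" "set cs \<subseteq> W"
    and D: "D \<subseteq> set cs"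
  shows "det_on W (row_var_coeff (cycle_of_list cs) D) =
    (-1) ^ card D + (if D = set cs then (-1) ^ (length cs - 1) else 0)"
proof -
  let ?\<tau> = "cycle_of_list cs"
  let ?t = "\<lambda>p. of_int (sign p) * (\<Prod>v\<in>W. row_var_coeff ?\<tau> D v (p v)) :: complex"
  have "?\<tau> permutes W"
    using cycle_permutes[of cs] cs(3) by (rule permutes_subset)
  then have "det_on W (row_var_coeff ?\<tau> D) = (\<Sum>p\<in>(if D = set cs then {id, ?\<tau>} else {id}). ?t p)"
    using permutes_row_var_coeff_cycle[OF cs D _ W]
    by (intro det_on_eq_sum_subset[OF W]) (auto simp: permutes_id)
  also have "\<dots> = (-1) ^ card D + (if D = set cs then (-1) ^ (length cs - 1) else 0)"
    using prod_row_var_coeff_diag[OF W] D cs(3) prod_row_var_coeff_cycle[OF cs(1,2)]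
      cycle_of_list_neq_id[OF cs(1,2)] sign_cycle_of_list[OF cs(1)]
    by auto
  finally show ?thesis .
qed

lemma det_on_row_var_coeff_cycle_eq_0_iff:
  assumes "finite W" "distinct cs" "length cs \<ge> 2" "set cs \<subseteq> W" "D \<subseteq> set cs"
  shows "det_on W (row_var_coeff (cycle_of_list cs) D) = 0 \<longleftrightarrow> D = set cs"
proof -
  have "card (set cs) = Suc (length cs - 1)"
    using assms(2,3) by (simp add: distinct_card)
  then show ?thesis
    using det_on_row_var_coeff_cycle[OF assms] by auto
qed

lemma rtrancl_cross_edge:
  assumes "(x, y) \<in> r\<^sup>*" "x \<in> A" "y \<notin> A"
  shows "\<exists>u v. (u, v) \<in> r \<and> u \<in> A \<and> v \<notin> A"
  using assms by (induction rule: rtrancl_induct) auto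

lemma cycle_of_list_steps:
  assumes "distinct cs" "\<And>i. Suc i < length cs \<Longrightarrow> (cs ! i, cs ! Suc i) \<in> r"
    and "(cs ! (length cs - 1), cs ! 0) \<in> r" "c \<in> set cs"
  shows "(c, cycle_of_list cs c) \<in> r"
proof -
  obtain i where i: "i < length cs" "c = cs ! i"
    using assms(4) by (auto simp: in_set_conv_nth)
  have next_c: "cycle_of_list cs c = cs ! (Suc i mod length cs)"
    using cycle_of_list_nth[OF assms(1) i(1), of 1] i by simp
  show ?thesis
  proof (cases "Suc i < length cs")
    case True
    then show ?thesis
      using assms(2) next_c i by simp
  next
    case False
    then have "Suc i = length cs"
      using i(1) by simp
    then have "i = length cs - 1" "Suc i mod length cs = 0"
      by simp_all
    then show ?thesis
      using next_c i assms(3) by simp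
  qed
qed

lemma exists_cycle_through_edge:
  assumes ab: "(a, b) \<in> E" "a \<noteq> b" and ba: "(b, a) \<in> (E \<inter> W \<times> W)\<^sup>*" and "b \<in> W"
  obtains cs where "distinct cs" "length cs \<ge> 2" "set cs \<subseteq> W"
    "\<And>c. c \<in> set cs \<Longrightarrow> (c, cycle_of_list cs c) \<in> E" "a \<in> set cs" "b \<in> set cs"
proof -
  let ?R = "\<lambda>x y. (x, y) \<in> E \<inter> W \<times> W"
  have "{(x, y). ?R x y} = E \<inter> W \<times> W"
    by auto
  then have "?R\<^sup>*\<^sup>* b a"
    using ba by (simp only: rtranclp_rtrancl_eq)
  then obtain xs where "rtrancl_path ?R b xs a"
    by (auto simp: rtranclp_eq_rtrancl_path)
  then obtain ys where path: "rtrancl_path ?R b ys a" and "distinct (b # ys)"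
    by (rule rtrancl_path_distinct)
  define cs where "cs = b # ys"
  have "ys \<noteq> []"
    using path ab(2) by (auto elim: rtrancl_path.cases)
  then have len: "length cs \<ge> 2" and last: "cs ! (length cs - 1) = a"
    using rtrancl_path_last[OF path] by (auto simp: cs_def last_conv_nth Suc_le_eq)
  have "distinct cs"
    using \<open>distinct (b # ys)\<close> by (simp add: cs_def)
  moreover have "set cs \<subseteq> W"
    using rtrancl_path_Range[OF path] \<open>b \<in> W\<close> by (auto simp: cs_def)
  moreover have "(c, cycle_of_list cs c) \<in> E" if "c \<in> set cs" for c
    using \<open>distinct cs\<close> _ _ that
  proof (rule cycle_of_list_steps)
    show "(cs ! i, cs ! Suc i) \<in> E" if "Suc i < length cs" for i
      using rtrancl_path_nth[OF path, of i] that by (simp add: cs_def)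
    show "(cs ! (length cs - 1), cs ! 0) \<in> E"
      using last ab(1) by (simp add: cs_def)
  qed
  moreover have "a \<in> set cs"
    unfolding last[symmetric] using len by (intro nth_mem) simp
  moreover have "b \<in> set cs"
    by (simp add: cs_def)
  ultimately show ?thesis
    using that len by blast
qed

section \<open>Irreducibility\<close>

locale det_factorization =
  fixes E :: "('v \<times> 'v) set" and W :: "'v set" and g h :: "'v indet mpoly"
  assumes finite_E: "finite E" and loop_free: "\<And>v. (v, v) \<notin> E" and finite_W: "finite W"
    and factorization: "det_on W (Lmat E) = g * h"
    and vars_disjoint: "vars g \<inter> vars h = {}"
begin

definition h_rows :: "'v set" where
  "h_rows = {w\<in>W. Inr w \<in> vars h}"

lemma homogeneous_factorization: "homogeneous (card W) (g * h)"
  using homogeneous_det_Lmat[OF finite_W, of E] by (simp add: factorization)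

lemma lookup_det_row_var_split:
  "lookup (det_on W (Lmat E)) (set_monom (row_var \<tau> D ` W)) =
    lookup g (set_monom (row_var \<tau> D ` W - vars h)) *
    lookup h (set_monom (row_var \<tau> D ` W \<inter> vars h))"
  unfolding factorization using finite_W by (simp add: lookup_mult_set_monom vars_disjoint)

text \<open>Homogeneity fixes how many of the chosen row variables lie in \<open>h\<close>; if \<open>D\<close> avoids
  \<open>h_rows\<close> or lies inside it, this pins down exactly which ones.\<close>

lemma card_row_var_in_h:
  assumes "\<And>d. d \<in> D \<Longrightarrow> (d, \<tau> d) \<in> E" "det_on W (row_var_coeff \<tau> D) \<noteq> 0"
  shows "card {w\<in>W. row_var \<tau> D w \<in> vars h} = card h_rows"
proof -
  have image_inter: "row_var \<sigma> F ` W \<inter> vars h = row_var \<sigma> F ` {w\<in>W. row_var \<sigma> F w \<in> vars h}"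
    for \<sigma> F by auto
  have "card (row_var \<tau> D ` W \<inter> vars h) = card (row_var id {} ` W \<inter> vars h)"
    using assms finite_W vars_disjoint
      lookup_det_Lmat_row_var[OF finite_E loop_free finite_W assms(1)]
      lookup_det_Lmat_diagonal[OF finite_E loop_free finite_W]
    by (intro card_inter_vars_eq[OF homogeneous_factorization]) (auto simp: factorization)
  then show ?thesis
    unfolding image_inter
    by (simp add: card_image inj_on_row_var h_rows_def)
qed

lemma row_var_in_h_iff:
  assumes "\<And>d. d \<in> D \<Longrightarrow> (d, \<tau> d) \<in> E" "det_on W (row_var_coeff \<tau> D) \<noteq> 0"
    and "D \<inter> h_rows = {} \<or> D \<subseteq> h_rows" "w \<in> W"
  shows "row_var \<tau> D w \<in> vars h \<longleftrightarrow> w \<in> h_rows"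
proof -
  have "{w\<in>W. row_var \<tau> D w \<in> vars h} = h_rows"
    using assms(3)
  proof
    assume "D \<inter> h_rows = {}"
    then have "h_rows \<subseteq> {w\<in>W. row_var \<tau> D w \<in> vars h}"
      by (auto simp: h_rows_def row_var_def)
    then show ?thesis
      using card_row_var_in_h[OF assms(1,2)] finite_W by (intro card_subset_eq[symmetric]) auto
  next
    assume "D \<subseteq> h_rows"
    then have "{w\<in>W. row_var \<tau> D w \<in> vars h} \<subseteq> h_rows"
      by (auto simp: h_rows_def row_var_def split: if_splits)
    then show ?thesis
      using card_row_var_in_h[OF assms(1,2)] finite_W
      by (intro card_subset_eq) (auto simp: h_rows_def)
  qed
  then show ?thesis
    using assms(4) by blast
qed

lemma h_unit_if_h_rows_empty:
  assumes "h_rows = {}"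
  shows "h dvd 1"
proof (rule homogeneous_0_unit)
  have "lookup (g * h) (set_monom (Inr ` W)) = 1"
    using lookup_det_Lmat_diagonal[OF finite_E loop_free finite_W] by (simp add: factorization)
  moreover have "Inr ` W \<inter> vars h = {}"
    using assms by (auto simp: h_rows_def)
  ultimately show "homogeneous 0 h"
    using monom_degree_factor[OF homogeneous_factorization vars_disjoint _ finite_imageI[OF finite_W]]
    unfolding homogeneous_def by (metis card.empty zero_neq_one)
  show "h \<noteq> 0"
    using \<open>lookup (g * h) (set_monom (Inr ` W)) = 1\<close> by auto
qed

text \<open>A cycle meeting both \<open>h_rows\<close> and its complement: the monomials of the cycle restricted to
  either side have nonzero coefficients, and their \<open>g\<close>-part and \<open>h\<close>-part recombine to the
  monomial of the full cycle, whose coefficient vanishes.\<close>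

lemma no_cycle_across_h_rows:
  assumes cs: "distinct cs" "length cs \<ge> 2" "set cs \<subseteq> W"
    and edges: "\<And>c. c \<in> set cs \<Longrightarrow> (c, cycle_of_list cs c) \<in> E"
    and "u \<in> set cs" "u \<notin> h_rows" "v \<in> set cs" "v \<in> h_rows"
  shows False
proof -
  let ?\<tau> = "cycle_of_list cs" and ?C = "set cs"
  define DA where "DA = ?C - h_rows"
  define DB where "DB = ?C \<inter> h_rows"
  let ?Z = "\<lambda>D. row_var ?\<tau> D ` W"
  have coeff: "lookup (det_on W (Lmat E)) (set_monom (?Z D)) = det_on W (row_var_coeff ?\<tau> D)"
    if "D \<subseteq> ?C" for D
    using that edges by (intro lookup_det_Lmat_row_var[OF finite_E loop_free finite_W]) auto
  have nonzero: "det_on W (row_var_coeff ?\<tau> D) \<noteq> 0" if "D \<subseteq> ?C" "D \<noteq> ?C" for D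
    using det_on_row_var_coeff_cycle_eq_0_iff[OF finite_W cs that(1)] that(2) by simp
  have DA: "DA \<subseteq> ?C" "DA \<noteq> ?C" and DB: "DB \<subseteq> ?C" "DB \<noteq> ?C"
    using assms(5-8) by (auto simp: DA_def DB_def)
  have sideA: "row_var ?\<tau> DA w \<in> vars h \<longleftrightarrow> w \<in> h_rows" if "w \<in> W" for w
    using DA edges by (intro row_var_in_h_iff[OF _ nonzero[OF DA] _ that]) (auto simp: DA_def)
  have sideB: "row_var ?\<tau> DB w \<in> vars h \<longleftrightarrow> w \<in> h_rows" if "w \<in> W" for w
    using DB edges by (intro row_var_in_h_iff[OF _ nonzero[OF DB] _ that]) (auto simp: DB_def)
  have agreeA: "row_var ?\<tau> ?C w = row_var ?\<tau> DA w" if "w \<notin> h_rows" for w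
    using that by (simp add: row_var_def DA_def)
  have agreeB: "row_var ?\<tau> ?C w = row_var ?\<tau> DB w" if "w \<in> h_rows" for w
    using that by (simp add: row_var_def DB_def)
  have "?Z ?C - vars h = ?Z DA - vars h"
    using sideA sideB agreeA agreeB by (auto simp: image_iff) metis+
  moreover have "?Z ?C \<inter> vars h = ?Z DB \<inter> vars h"
    using sideA sideB agreeA agreeB by (auto simp: image_iff) metis+
  moreover have "lookup (det_on W (Lmat E)) (set_monom (?Z DA)) \<noteq> 0"
    and "lookup (det_on W (Lmat E)) (set_monom (?Z DB)) \<noteq> 0"
    using coeff[OF DA(1)] coeff[OF DB(1)] nonzero[OF DA] nonzero[OF DB] by simp_all
  ultimately have "lookup (det_on W (Lmat E)) (set_monom (?Z ?C)) \<noteq> 0"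
    unfolding lookup_det_row_var_split by auto
  then show False
    using coeff det_on_row_var_coeff_cycle_eq_0_iff[OF finite_W cs] by simp
qed

lemma factor_is_unit:
  assumes "strongly_connected E W"
  shows "g dvd 1 \<or> h dvd 1"
proof -
  interpret swapped: det_factorization E W h g
    using finite_E loop_free finite_W factorization vars_disjoint
    by unfold_locales (auto simp: mult.commute)
  consider "h_rows = {}" | "W - h_rows = {}" | a b where "a \<in> W - h_rows" "b \<in> h_rows"
    by blast
  then show ?thesis
  proof cases
    case 1
    then show ?thesis
      using h_unit_if_h_rows_empty by blast
  next
    case 2
    then have "swapped.h_rows = {}"
      using vars_disjoint by (auto simp: h_rows_def swapped.h_rows_def)
    then show ?thesis
      using swapped.h_unit_if_h_rows_empty by blast
  next
    case 3
    then have "(a, b) \<in> (E \<inter> W \<times> W)\<^sup>*"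
      using assms by (auto simp: strongly_connected_def h_rows_def)
    then obtain u v where uv: "(u, v) \<in> E \<inter> W \<times> W" "u \<in> W - h_rows" "v \<notin> W - h_rows"
      using rtrancl_cross_edge[of a b _ "W - h_rows"] 3 by blast
    moreover have "(v, u) \<in> (E \<inter> W \<times> W)\<^sup>*"
      using assms uv by (auto simp: strongly_connected_def)
    ultimately obtain cs where "distinct cs" "length cs \<ge> 2" "set cs \<subseteq> W"
      "\<And>c. c \<in> set cs \<Longrightarrow> (c, cycle_of_list cs c) \<in> E" "u \<in> set cs" "v \<in> set cs"
      using exists_cycle_through_edge[of u v E W] loop_free by blast
    then show ?thesis
      using no_cycle_across_h_rows uv by blast
  qed
qed

end

theorem lemma4p1:
  fixes V :: "'v set" and E :: "('v \<times> 'v) set" and W :: "'v set"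
  assumes "simple_digraph V E"
    and "strongly_connected E V"
    and "W \<noteq> {}" and "W \<subset> V"
    and "strongly_connected E W"
  shows "irreducible (det_on W (Lmat E))"
proof -
  have "finite V" "E \<subseteq> V \<times> V" and loop_free: "\<And>v. (v, v) \<notin> E"
    using assms(1) by (auto simp: simple_digraph_def)
  then have fin: "finite E" "finite W"
    using assms(4) by (auto intro: finite_subset)
  let ?f = "det_on W (Lmat E)"
  have "?f \<noteq> 0"
    using lookup_det_Lmat_diagonal[OF fin(1) loop_free fin(2)] by auto
  moreover have "\<not> ?f dvd 1"
    using homogeneous_not_unit[OF homogeneous_det_Lmat[OF fin(2)]] fin(2) assms(3)
    by (simp add: card_gt_0_iff)
  moreover have "g dvd 1 \<or> h dvd 1" if "?f = g * h" for g h
  proof -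
    have "vars g \<inter> vars h = {}"
      using multiaffine_mult_vars_disjoint multiaffine_det_Lmat[OF fin(2)] \<open>?f \<noteq> 0\<close> that
      by (metis mult_zero_left mult_zero_right)
    then interpret det_factorization E W g h
      using fin loop_free that by unfold_locales
    show ?thesis
      using factor_is_unit[OF assms(5)] .
  qed
  ultimately show ?thesis
    unfolding irreducible_def by blast
qed

end
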